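(* Let $(R,\mathfrak{m})$ be a Noetherian local ring, $M$ a finitely generated $R$-module, and $S \subseteq M$ a subset. Let $I(S,M) := \{y \in \langle S \rangle \mid f(y) \in \mathfrak{m} \text{ for all } f \in \mathrm{Hom}_R(M,R)\}$, an $R$-submodule of $\langle S \rangle$. Then $\delta_\mathfrak{m}(S,M) = \lambda_R(\langle S \rangle / I(S,M))$, where $\lambda_R$ denotes length.
   Context: $\langle S\rangle$ denotes the $R$-submodule of $M$ generated by $S$. $\delta_\mathfrak{m}(S,M)$ is the largest integer $n \ge 0$ such that there is a free $R$-submodule $G \subseteq \langle S\rangle$ of rank $n$ which is a direct summand of $M$. *)

theory Defs
  imports Main "HOL-Library.Extended_Nat"
begin

text \<open>Modules over a commutative ring R (a type of class comm_ring_1) are modelled by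
  the library locale module with scalar multiplication sc; the module M is the
  whole type 'm.\<close>

definition ideal_of :: "'a::comm_ring_1 set \<Rightarrow> bool" where
  "ideal_of J \<longleftrightarrow> module.subspace ((*) :: 'a \<Rightarrow> 'a \<Rightarrow> 'a) J"

definition maximal_ideal :: "'a::comm_ring_1 set \<Rightarrow> bool" where
  "maximal_ideal J \<longleftrightarrow> ideal_of J \<and> J \<noteq> UNIV \<and>
     (\<forall>K. ideal_of K \<longrightarrow> J \<subseteq> K \<longrightarrow> K = J \<or> K = UNIV)"

definition noetherian_ring :: "'a::comm_ring_1 itself \<Rightarrow> bool" where
  "noetherian_ring _ \<longleftrightarrow>
     (\<forall>J::'a set. ideal_of J \<longrightarrow> (\<exists>F. finite F \<and> J = module.span (*) F))"

definition local_ring_max :: "'a::comm_ring_1 set \<Rightarrow> bool" where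
  "local_ring_max mm \<longleftrightarrow> maximal_ideal mm \<and> (\<forall>J. maximal_ideal J \<longrightarrow> J = mm)"

definition fin_gen_module :: "('a::comm_ring_1 \<Rightarrow> 'm::ab_group_add \<Rightarrow> 'm) \<Rightarrow> bool" where
  "fin_gen_module sc \<longleftrightarrow> (\<exists>F. finite F \<and> module.span sc F = UNIV)"

definition dual_maps :: "('a::comm_ring_1 \<Rightarrow> 'm::ab_group_add \<Rightarrow> 'm) \<Rightarrow> ('m \<Rightarrow> 'a) set" where
  "dual_maps sc = {f. module_hom sc (*) f}"

definition I_SM :: "('a::comm_ring_1 \<Rightarrow> 'm::ab_group_add \<Rightarrow> 'm) \<Rightarrow> 'a set \<Rightarrow> 'm set \<Rightarrow> 'm set" where
  "I_SM sc mm S = {y \<in> module.span sc S. \<forall>f \<in> dual_maps sc. f y \<in> mm}"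

definition free_of_rank :: "('a::comm_ring_1 \<Rightarrow> 'm::ab_group_add \<Rightarrow> 'm) \<Rightarrow> 'm set \<Rightarrow> nat \<Rightarrow> bool" where
  "free_of_rank sc G n \<longleftrightarrow> (\<exists>B. finite B \<and> card B = n \<and> \<not> module.dependent sc B \<and>
      module.span sc B = G)"

definition direct_summand :: "('a::comm_ring_1 \<Rightarrow> 'm::ab_group_add \<Rightarrow> 'm) \<Rightarrow> 'm set \<Rightarrow> bool" where
  "direct_summand sc G \<longleftrightarrow> module.subspace sc G \<and>
     (\<exists>N. module.subspace sc N \<and> G \<inter> N = {0} \<and> {g + x | g x. g \<in> G \<and> x \<in> N} = UNIV)"

definition delta_m :: "('a::comm_ring_1 \<Rightarrow> 'm::ab_group_add \<Rightarrow> 'm) \<Rightarrow> 'm set \<Rightarrow> nat" where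
  "delta_m sc S = (GREATEST n. \<exists>G. G \<subseteq> module.span sc S \<and> free_of_rank sc G n \<and> direct_summand sc G)"

text \<open>Length of the quotient module N/I (for submodules I \<subseteq> N): supremum of the lengths n
  of strictly increasing chains of submodules of N/I, i.e. of submodules
  I = N_0 \<subset> N_1 \<subset> ... \<subset> N_n = N (correspondence theorem).\<close>
definition quot_length :: "('a::comm_ring_1 \<Rightarrow> 'm::ab_group_add \<Rightarrow> 'm) \<Rightarrow> 'm set \<Rightarrow> 'm set \<Rightarrow> enat" where
  "quot_length sc N I = Sup {enat n | n. \<exists>C :: nat \<Rightarrow> 'm set.
      C 0 = I \<and> C n = N \<and> (\<forall>i\<le>n. module.subspace sc (C i)) \<and> (\<forall>i<n. C i \<subset> C (Suc i))}"

end

theory Submission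
  imports Defs
begin

text \<open>Every functional is linear, so mm \<langle>S\<rangle> \<subseteq> I(S,M) and \<langle>S\<rangle>/I(S,M) is a vector
  space over R/mm whose length is its dimension: strict chains from I(S,M) to \<langle>S\<rangle> of length n
  correspond to families x 0, \<dots>, x (n - 1) in \<langle>S\<rangle> with independent residues. A basis of a
  free direct summand G \<subseteq> \<langle>S\<rangle> is such a family, because its coordinate functionals extend
  to M. Conversely, if there are n independent residues and G has rank k < n, the exchange lemma
  gives some x i outside G + I(S,M); its component z in a complement N of G is not in I(S,M),
  so f z is a unit for some functional f, and G + R z is again a free summand, with complement
  N \<inter> ker f.\<close>

section \<open>Ideals and local rings\<close>

lemma module_mult: "module ((*) :: 'a::comm_ring_1 \<Rightarrow> 'a \<Rightarrow> 'a)"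
  by unfold_locales (auto simp: algebra_simps)

lemma ideal_ofI:
  fixes J :: "'a::comm_ring_1 set"
  assumes "0 \<in> J" "\<And>x y. x \<in> J \<Longrightarrow> y \<in> J \<Longrightarrow> x + y \<in> J" "\<And>c x. x \<in> J \<Longrightarrow> c * x \<in> J"
  shows "ideal_of J"
  unfolding ideal_of_def by (rule module.subspaceI[OF module_mult]) (use assms in auto)

lemma ideal_ofD:
  fixes J :: "'a::comm_ring_1 set"
  assumes "ideal_of J"
  shows "0 \<in> J" "x \<in> J \<Longrightarrow> y \<in> J \<Longrightarrow> x + y \<in> J" "x \<in> J \<Longrightarrow> c * x \<in> J"
proof -
  interpret R: module "(*) :: 'a \<Rightarrow> 'a \<Rightarrow> 'a" by (rule module_mult)
  show "0 \<in> J" "x \<in> J \<Longrightarrow> y \<in> J \<Longrightarrow> x + y \<in> J" "x \<in> J \<Longrightarrow> c * x \<in> J"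
    using assms unfolding ideal_of_def by (auto intro: R.subspace_0 R.subspace_add R.subspace_scale)
qed

lemma ideal_of_eq_UNIV: "ideal_of J \<Longrightarrow> 1 \<in> J \<Longrightarrow> J = (UNIV :: 'a::comm_ring_1 set)"
  using ideal_ofD(3)[of J 1] by fastforce

lemma ideal_of_principal: "ideal_of (range (\<lambda>r. r * (a::'a::comm_ring_1)))"
proof (rule ideal_ofI)
  show "0 \<in> range (\<lambda>r. r * a)" by (metis mult_zero_left rangeI)
  show "x + y \<in> range (\<lambda>r. r * a)" if "x \<in> range (\<lambda>r. r * a)" "y \<in> range (\<lambda>r. r * a)" for x y
    using that by (auto simp: distrib_right[symmetric])
  show "c * x \<in> range (\<lambda>r. r * a)" if "x \<in> range (\<lambda>r. r * a)" for c x
    using that by (auto simp: mult.assoc[symmetric])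
qed

lemma ideal_of_chain_Union:
  assumes "\<C> \<noteq> {}" "\<And>J. J \<in> \<C> \<Longrightarrow> ideal_of (J :: 'a::comm_ring_1 set)"
    and "\<And>J K. J \<in> \<C> \<Longrightarrow> K \<in> \<C> \<Longrightarrow> J \<subseteq> K \<or> K \<subseteq> J"
  shows "ideal_of (\<Union>\<C>)"
proof (rule ideal_ofI)
  show "0 \<in> \<Union>\<C>" using assms(1,2) ideal_ofD(1) by blast
  show "c * x \<in> \<Union>\<C>" if "x \<in> \<Union>\<C>" for c x using that assms(2) ideal_ofD(3) by blast
  show "x + y \<in> \<Union>\<C>" if xy: "x \<in> \<Union>\<C>" "y \<in> \<Union>\<C>" for x y
  proof -
    obtain J K where "J \<in> \<C>" "K \<in> \<C>" "x \<in> J" "y \<in> K" using xy by blast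
    with assms(2) assms(3)[of J K] ideal_ofD(2) show ?thesis by blast
  qed
qed

lemma proper_ideal_le_maximal:
  fixes J :: "'a::comm_ring_1 set"
  assumes "ideal_of J" "1 \<notin> J"
  obtains M where "maximal_ideal M" "J \<subseteq> M"
proof -
  define \<A> where "\<A> = {K. ideal_of K \<and> J \<subseteq> K \<and> 1 \<notin> K}"
  have "\<exists>M\<in>\<A>. \<forall>K\<in>\<A>. M \<subseteq> K \<longrightarrow> K = M"
  proof (rule subset_Zorn_nonempty)
    show "\<A> \<noteq> {}" using assms unfolding \<A>_def by blast
    show "\<Union>\<C> \<in> \<A>" if "\<C> \<noteq> {}" "subset.chain \<A> \<C>" for \<C>
      using that unfolding \<A>_def subset.chain_def by (auto intro!: ideal_of_chain_Union)
  qed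
  then obtain M where M: "M \<in> \<A>" and max: "\<And>K. K \<in> \<A> \<Longrightarrow> M \<subseteq> K \<Longrightarrow> K = M" by blast
  have "maximal_ideal M"
    unfolding maximal_ideal_def
  proof (intro conjI allI impI)
    show "ideal_of M" "M \<noteq> UNIV" using M unfolding \<A>_def by auto
    show "K = M \<or> K = UNIV" if "ideal_of K" "M \<subseteq> K" for K
      using that M max[of K] ideal_of_eq_UNIV unfolding \<A>_def by blast
  qed
  with M that show ?thesis unfolding \<A>_def by blast
qed

lemma local_ring_max_unit:
  assumes "local_ring_max mm" "a \<notin> mm"
  shows "\<exists>u. u * a = 1"
proof (rule ccontr)
  assume "\<nexists>u. u * a = 1"
  then have "1 \<notin> range (\<lambda>r. r * a)" by (metis rangeE)
  then obtain M where "maximal_ideal M" "range (\<lambda>r. r * a) \<subseteq> M"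
    using proper_ideal_le_maximal ideal_of_principal by metis
  moreover have "a \<in> range (\<lambda>r. r * a)" by (metis mult_1 rangeI)
  ultimately show False using assms unfolding local_ring_max_def by blast
qed

locale local_module = module scale
  for scale :: "'a::comm_ring_1 \<Rightarrow> 'b::ab_group_add \<Rightarrow> 'b" (infixr \<open>*s\<close> 75) +
  fixes mm :: "'a set"
  assumes local_ring: "local_ring_max mm"
begin

lemma ideal_mm: "ideal_of mm"
  using local_ring unfolding local_ring_max_def maximal_ideal_def by blast

lemma one_notin_mm: "1 \<notin> mm"
  using local_ring ideal_of_eq_UNIV unfolding local_ring_max_def maximal_ideal_def by blast

lemma unit_if_notin_mm: "a \<notin> mm \<Longrightarrow> \<exists>u. u * a = 1"
  using local_ring local_ring_max_unit by blast

end

section \<open>Residual independence\<close>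

lemma (in module) sum_indicator_scale:
  "finite K \<Longrightarrow> j \<in> K \<Longrightarrow> (\<Sum>i\<in>K. (if i = j then 1 else 0) *s x i) = x j"
  by (simp add: if_distrib[of "\<lambda>c. c *s _"] cong: if_cong)

lemma (in module) combination_mod_drop:
  assumes I: "subspace I" and T: "finite T" "t \<notin> T"
    and x: "x - (\<Sum>s\<in>insert t T. a s *s s) \<in> I" and t: "a t *s t \<in> I"
  shows "x - (\<Sum>s\<in>T. a s *s s) \<in> I"
proof -
  have "x - (\<Sum>s\<in>T. a s *s s) = (x - (\<Sum>s\<in>insert t T. a s *s s)) + a t *s t"
    using T by simp
  also have "\<dots> \<in> I" using x t by (rule subspace_add[OF I])
  finally show ?thesis .
qed

lemma (in module) combination_mod_eliminate:
  assumes I: "subspace I" and T: "finite T" "t \<notin> T"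
    and x: "x - (\<Sum>s\<in>insert t T. a s *s s) \<in> I" and y: "y - (\<Sum>s\<in>insert t T. b s *s s) \<in> I"
    and c: "c * b t = a t"
  shows "(x - c *s y) - (\<Sum>s\<in>T. (a s - c * b s) *s s) \<in> I"
proof -
  have "(x - c *s y) - (\<Sum>s\<in>T. (a s - c * b s) *s s)
      = (x - (\<Sum>s\<in>insert t T. a s *s s)) - c *s (y - (\<Sum>s\<in>insert t T. b s *s s))"
    using T c by (simp add: algebra_simps scale_sum_right sum_subtractf)
  also have "\<dots> \<in> I" by (rule subspace_diff[OF I x subspace_scale[OF I y]])
  finally show ?thesis .
qed

context local_module
begin

text \<open>When mm x i \<subseteq> I, this says that the residues of the x i in M/I are linearly independent
  over the residue field R/mm.\<close>
definition residually_independent :: "'b set \<Rightarrow> 'k set \<Rightarrow> ('k \<Rightarrow> 'b) \<Rightarrow> bool" where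
  "residually_independent I K x \<longleftrightarrow> (\<forall>r. (\<Sum>i\<in>K. r i *s x i) \<in> I \<longrightarrow> (\<forall>i\<in>K. r i \<in> mm))"

lemma residually_independentD:
  "residually_independent I K x \<Longrightarrow> (\<Sum>i\<in>K. r i *s x i) \<in> I \<Longrightarrow> i \<in> K \<Longrightarrow> r i \<in> mm"
  unfolding residually_independent_def by blast

lemma residually_independent_notin:
  assumes "residually_independent I K x" "finite K" "j \<in> K"
  shows "x j \<notin> I"
proof
  assume "x j \<in> I"
  then have "(\<Sum>i\<in>K. (if i = j then 1 else 0) *s x i) \<in> I"
    using assms(2,3) by (simp add: sum_indicator_scale)
  from residually_independentD[OF assms(1) this assms(3)] show False
    using one_notin_mm by simp
qed

lemma residually_independent_reindex:
  assumes ind: "residually_independent I K x" and e: "bij_betw e K' K"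
  shows "residually_independent I K' (x \<circ> e)"
  unfolding residually_independent_def
proof (intro allI impI ballI)
  fix r i assume r: "(\<Sum>i\<in>K'. r i *s (x \<circ> e) i) \<in> I" and i: "i \<in> K'"
  have inj: "inj_on e K'" using e by (simp add: bij_betw_def)
  define r' where "r' = r \<circ> the_inv_into K' e"
  have "(\<Sum>v\<in>K. r' v *s x v) = (\<Sum>i\<in>K'. r' (e i) *s x (e i))"
    using sum.reindex_bij_betw[OF e, of "\<lambda>v. r' v *s x v"] by simp
  also have "\<dots> = (\<Sum>i\<in>K'. r i *s (x \<circ> e) i)"
    unfolding r'_def by (rule sum.cong) (auto simp: the_inv_into_f_f[OF inj])
  finally have "\<forall>v\<in>K. r' v \<in> mm" using r ind unfolding residually_independent_def by metis
  then have "r' (e i) \<in> mm" using i e by (auto simp: bij_betw_def)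
  then show "r i \<in> mm" by (simp add: r'_def the_inv_into_f_f[OF inj i])
qed

lemma residually_independent_eliminate:
  assumes ind: "residually_independent I K x" and K: "finite K" "j \<in> K"
  shows "residually_independent I (K - {j}) (\<lambda>i. x i - c i *s x j)"
  unfolding residually_independent_def
proof (intro allI impI)
  fix r assume r: "(\<Sum>i\<in>K - {j}. r i *s (x i - c i *s x j)) \<in> I"
  define r' where "r' = r(j := - (\<Sum>i\<in>K - {j}. r i * c i))"
  have "(\<Sum>i\<in>K - {j}. r' i *s x i) = (\<Sum>i\<in>K - {j}. r i *s x i)"
    by (rule sum.cong) (auto simp: r'_def)
  then have "(\<Sum>i\<in>K. r' i *s x i) = r' j *s x j + (\<Sum>i\<in>K - {j}. r i *s x i)"
    using K by (simp add: sum.remove)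
  also have "\<dots> = (\<Sum>i\<in>K - {j}. r i *s (x i - c i *s x j))"
    by (simp add: r'_def scale_right_diff_distrib sum_subtractf scale_sum_left)
  finally have "(\<Sum>i\<in>K. r' i *s x i) \<in> I" using r by simp
  then show "\<forall>i\<in>K - {j}. r i \<in> mm"
    using residually_independentD[OF ind] by (metis DiffE fun_upd_other insertI1 r'_def)
qed

text \<open>Steinitz exchange over the residue field: pivoting on a coefficient outside mm removes one
  generator t of T and one member x j of the family.\<close>
lemma residually_independent_card_le:
  assumes I: "subspace I" and T: "finite T" and K: "finite K"
    and mm_T: "\<And>t r. t \<in> T \<Longrightarrow> r \<in> mm \<Longrightarrow> r *s t \<in> I"
    and rep: "\<And>i. i \<in> K \<Longrightarrow> \<exists>a. x i - (\<Sum>t\<in>T. a t *s t) \<in> I"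
    and ind: "residually_independent I K x"
  shows "card K \<le> card T"
  using T K mm_T rep ind
proof (induction T arbitrary: K x rule: finite_induct)
  case empty
  have "K = {}"
    using empty.prems(3) residually_independent_notin[OF empty.prems(4,1)] by fastforce
  then show ?case by simp
next
  case (insert t T)
  obtain a where a: "\<And>i. i \<in> K \<Longrightarrow> x i - (\<Sum>s\<in>insert t T. a i s *s s) \<in> I"
    using insert.prems(3) by metis
  have mm_T: "\<And>s r. s \<in> T \<Longrightarrow> r \<in> mm \<Longrightarrow> r *s s \<in> I" and mm_t: "\<And>r. r \<in> mm \<Longrightarrow> r *s t \<in> I"
    using insert.prems(2) by blast+
  show ?case
  proof (cases "\<forall>i\<in>K. a i t \<in> mm")
    case True
    then have "x i - (\<Sum>s\<in>T. a i s *s s) \<in> I" if "i \<in> K" for i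
      using that insert.hyps by (intro combination_mod_drop[OF I _ _ a mm_t]) auto
    then have "card K \<le> card T" using insert.IH[OF insert.prems(1) mm_T _ insert.prems(4)] by blast
    then show ?thesis using insert.hyps by simp
  next
    case False
    then obtain j where j: "j \<in> K" "a j t \<notin> mm" by blast
    obtain u where u: "u * a j t = 1" using unit_if_notin_mm[OF j(2)] by blast
    define c where "c i = a i t * u" for i
    have c: "c i * a j t = a i t" for i using u by (simp add: c_def mult.assoc)
    have "card (K - {j}) \<le> card T"
    proof (rule insert.IH[OF _ mm_T])
      show "finite (K - {j})" using insert.prems(1) by simp
      show "residually_independent I (K - {j}) (\<lambda>i. x i - c i *s x j)"
        by (rule residually_independent_eliminate[OF insert.prems(4,1) j(1)])
      fix i assume "i \<in> K - {j}"
      then have "(x i - c i *s x j) - (\<Sum>s\<in>T. (a i s - c i * a j s) *s s) \<in> I"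
        using insert.hyps j(1) c by (intro combination_mod_eliminate[OF I _ _ a a]) auto
      then show "\<exists>b. (x i - c i *s x j) - (\<Sum>s\<in>T. b s *s s) \<in> I"
        by (rule exI[of _ "\<lambda>s. a i s - c i * a j s"])
    qed
    then show ?thesis using insert.prems(1) j(1) insert.hyps by (simp add: card_Diff_singleton)
  qed
qed

end

section \<open>Strict chains of submodules\<close>

definition strict_subspace_chain ::
    "('a::comm_ring_1 \<Rightarrow> 'b::ab_group_add \<Rightarrow> 'b) \<Rightarrow> (nat \<Rightarrow> 'b set) \<Rightarrow> nat \<Rightarrow> 'b set \<Rightarrow> 'b set \<Rightarrow> bool"
  where "strict_subspace_chain sc C n I L \<longleftrightarrow>
     C 0 = I \<and> C n = L \<and> (\<forall>i\<le>n. module.subspace sc (C i)) \<and> (\<forall>i<n. C i \<subset> C (Suc i))"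

definition prefix_span ::
    "('a::comm_ring_1 \<Rightarrow> 'b::ab_group_add \<Rightarrow> 'b) \<Rightarrow> 'b set \<Rightarrow> (nat \<Rightarrow> 'b) \<Rightarrow> nat \<Rightarrow> 'b set"
  where "prefix_span sc I x j = {y. \<exists>c. y - (\<Sum>i<j. sc (c i) (x i)) \<in> I}"

context module
begin

lemma quot_length_eq_Sup_chains:
  "quot_length scale L I = Sup {enat n | n. \<exists>C. strict_subspace_chain scale C n I L}"
  unfolding quot_length_def strict_subspace_chain_def ..

lemma strict_subspace_chain_mono:
  assumes "strict_subspace_chain scale C n I L" "i \<le> k" "k \<le> n"
  shows "C i \<subseteq> C k"
  using assms(2,3)
proof (induction k rule: dec_induct)
  case (step k)
  then have "C k \<subset> C (Suc k)" using assms(1) unfolding strict_subspace_chain_def by simp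
  with step show ?case by simp
qed simp

lemma prefix_spanI: "y - (\<Sum>i<j. c i *s x i) \<in> I \<Longrightarrow> y \<in> prefix_span scale I x j"
  unfolding prefix_span_def by blast

lemma prefix_spanE:
  assumes "y \<in> prefix_span scale I x j"
  obtains c where "y - (\<Sum>i<j. c i *s x i) \<in> I"
  using assms unfolding prefix_span_def by blast

lemma subspace_prefix_span:
  assumes I: "subspace I"
  shows "subspace (prefix_span scale I x j)"
proof (rule subspaceI)
  have "0 - (\<Sum>i<j. 0 *s x i) \<in> I" by (simp add: subspace_0[OF I])
  then show "0 \<in> prefix_span scale I x j" by (rule prefix_spanI)
next
  fix y z assume "y \<in> prefix_span scale I x j" "z \<in> prefix_span scale I x j"
  then obtain c d where c: "y - (\<Sum>i<j. c i *s x i) \<in> I" and d: "z - (\<Sum>i<j. d i *s x i) \<in> I"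
    by (metis prefix_spanE)
  have "y + z - (\<Sum>i<j. (c i + d i) *s x i) = (y - (\<Sum>i<j. c i *s x i)) + (z - (\<Sum>i<j. d i *s x i))"
    by (simp add: scale_left_distrib sum.distrib)
  also have "\<dots> \<in> I" using c d by (rule subspace_add[OF I])
  finally show "y + z \<in> prefix_span scale I x j" by (rule prefix_spanI)
next
  fix r y assume "y \<in> prefix_span scale I x j"
  then obtain c where c: "y - (\<Sum>i<j. c i *s x i) \<in> I" by (rule prefix_spanE)
  have "r *s y - (\<Sum>i<j. (r * c i) *s x i) = r *s (y - (\<Sum>i<j. c i *s x i))"
    by (simp add: scale_right_diff_distrib scale_sum_right)
  also have "\<dots> \<in> I" using c by (rule subspace_scale[OF I])
  finally show "r *s y \<in> prefix_span scale I x j" by (rule prefix_spanI)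
qed

lemma prefix_span_0 [simp]: "prefix_span scale I x 0 = I"
  unfolding prefix_span_def by simp

lemma prefix_span_subset_Suc: "prefix_span scale I x j \<subseteq> prefix_span scale I x (Suc j)"
proof
  fix y assume "y \<in> prefix_span scale I x j"
  then obtain c where "y - (\<Sum>i<j. c i *s x i) \<in> I" by (rule prefix_spanE)
  moreover have "(\<Sum>i<Suc j. (c(j := 0)) i *s x i) = (\<Sum>i<j. c i *s x i)"
    by (simp add: sum.lessThan_Suc)
  ultimately show "y \<in> prefix_span scale I x (Suc j)" by (metis prefix_spanI)
qed

lemma in_prefix_span_Suc: "subspace I \<Longrightarrow> x j \<in> prefix_span scale I x (Suc j)"
  by (rule prefix_spanI[where c="\<lambda>i. if i = j then 1 else 0"]) (simp add: sum_indicator_scale subspace_0)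

lemma prefix_span_subset:
  assumes I: "I \<subseteq> L" and L: "subspace L" and x: "\<And>i. i < j \<Longrightarrow> x i \<in> L"
  shows "prefix_span scale I x j \<subseteq> L"
proof
  fix y assume "y \<in> prefix_span scale I x j"
  then obtain c where c: "y - (\<Sum>i<j. c i *s x i) \<in> I" by (rule prefix_spanE)
  have "(\<Sum>i<j. c i *s x i) \<in> L" using x by (intro subspace_sum[OF L] subspace_scale[OF L]) auto
  then have "(y - (\<Sum>i<j. c i *s x i)) + (\<Sum>i<j. c i *s x i) \<in> L"
    using c I by (intro subspace_add[OF L]) auto
  then show "y \<in> L" by simp
qed

end

context local_module
begin

lemma residually_independent_notin_prefix_span:
  assumes ind: "residually_independent I {..<n} x" and j: "j < n"
  shows "x j \<notin> prefix_span scale I x j"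
proof
  assume "x j \<in> prefix_span scale I x j"
  then obtain c where c: "x j - (\<Sum>i<j. c i *s x i) \<in> I" by (rule prefix_spanE)
  define r where "r i = (if i < j then - c i else if i = j then 1 else 0)" for i
  have "(\<Sum>i<n. r i *s x i) = (\<Sum>i<Suc j. r i *s x i)"
    by (rule sum.mono_neutral_right) (use j in \<open>auto simp: r_def\<close>)
  also have "\<dots> = x j - (\<Sum>i<j. c i *s x i)"
    by (simp add: r_def sum_negf[symmetric])
  finally have "r j \<in> mm" using residually_independentD[OF ind] c j by simp
  then show False using one_notin_mm by (simp add: r_def)
qed

lemma residually_independent_strict_subspace_chain:
  assumes n: "0 < n" and I: "subspace I" and L: "subspace L" "I \<subseteq> L"
    and xL: "\<And>i. i < n \<Longrightarrow> x i \<in> L" and ind: "residually_independent I {..<n} x"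
  shows "\<exists>C. strict_subspace_chain scale C n I L"
proof -
  define C where "C j = (if j < n then prefix_span scale I x j else L)" for j
  have "C i \<subset> C (Suc i)" if i: "i < n" for i
  proof -
    have "prefix_span scale I x i \<subseteq> L" using xL i by (intro prefix_span_subset[OF L(2,1)]) auto
    then show ?thesis
      using i prefix_span_subset_Suc[of I x i] in_prefix_span_Suc[OF I, of x i] xL[OF i]
        residually_independent_notin_prefix_span[OF ind i]
      by (auto simp: C_def)
  qed
  then have "strict_subspace_chain scale C n I L"
    unfolding strict_subspace_chain_def using n subspace_prefix_span[OF I] L(1) by (simp add: C_def)
  then show ?thesis by blast
qed

lemma scale_in_subspace_imp_mm:
  assumes "subspace W" "x \<notin> W" "r *s x \<in> W"
  shows "r \<in> mm"
proof (rule ccontr)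
  assume "r \<notin> mm"
  then obtain u where "u * r = 1" using unit_if_notin_mm by blast
  then show False using assms subspace_scale[OF assms(1,3), of u] by simp
qed

text \<open>Pick x i in C (Suc i) - C i. In a relation \<open>\<Sum>i<Suc j. r i *s x i \<in> I\<close> the top
  coefficient r j lies in mm because x j \<notin> C j; as mm L \<subseteq> I, the top term can then be
  dropped.\<close>
lemma strict_subspace_chain_residually_independent:
  assumes C: "strict_subspace_chain scale C n I L"
    and mm_L: "\<And>r y. r \<in> mm \<Longrightarrow> y \<in> L \<Longrightarrow> r *s y \<in> I"
  shows "\<exists>x. (\<forall>i<n. x i \<in> L) \<and> residually_independent I {..<n} x"
proof -
  have sub: "\<And>i. i \<le> n \<Longrightarrow> subspace (C i)" and C0: "C 0 = I" and Cn: "C n = L"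
    using C unfolding strict_subspace_chain_def by blast+
  note mono = strict_subspace_chain_mono[OF C]
  have "\<forall>i. \<exists>z. i < n \<longrightarrow> z \<in> C (Suc i) \<and> z \<notin> C i"
    using C unfolding strict_subspace_chain_def by blast
  then obtain x where x: "\<And>i. i < n \<Longrightarrow> x i \<in> C (Suc i) \<and> x i \<notin> C i" by metis
  have xL: "x i \<in> L" if "i < n" for i using x[OF that] mono[of "Suc i" n] that Cn by auto
  have "\<forall>i<j. r i \<in> mm" if "j \<le> n" "(\<Sum>i<j. r i *s x i) \<in> I" for j r
    using that
  proof (induction j)
    case (Suc j)
    let ?s = "\<Sum>i<j. r i *s x i"
    have j: "j < n" using Suc.prems(1) by simp
    have Cj: "subspace (C j)" using sub j by simp
    have "x i \<in> C j" if "i < j" for i using x[of i] mono[of "Suc i" j] that j by auto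
    then have s: "?s \<in> C j" by (intro subspace_sum[OF Cj] subspace_scale[OF Cj]) simp
    have "I \<subseteq> C j" using mono[of 0 j] C0 j by simp
    then have total: "?s + r j *s x j \<in> C j" using Suc.prems(2) by auto
    have "r j *s x j \<in> C j" using subspace_diff[OF Cj total s] by simp
    then have rj: "r j \<in> mm" using scale_in_subspace_imp_mm[OF Cj] x[OF j] by blast
    have "?s = (?s + r j *s x j) - r j *s x j" by simp
    also have "\<dots> \<in> I"
      using Suc.prems(2) mm_L[OF rj xL[OF j]] sub[of 0] C0 by (intro subspace_diff) auto
    finally have "\<forall>i<j. r i \<in> mm" using Suc.IH j by simp
    with rj show ?case using less_Suc_eq by auto
  qed simp
  then show ?thesis using xL unfolding residually_independent_def by auto
qed

end

section \<open>Free direct summands\<close>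

definition complementary :: "('a::comm_ring_1 \<Rightarrow> 'b::ab_group_add \<Rightarrow> 'b) \<Rightarrow> 'b set \<Rightarrow> 'b set \<Rightarrow> bool"
  where "complementary sc G N \<longleftrightarrow>
     module.subspace sc N \<and> G \<inter> N = {0} \<and> {g + x | g x. g \<in> G \<and> x \<in> N} = UNIV"

definition has_free_summand :: "('a::comm_ring_1 \<Rightarrow> 'b::ab_group_add \<Rightarrow> 'b) \<Rightarrow> 'b set \<Rightarrow> nat \<Rightarrow> bool"
  where "has_free_summand sc L n \<longleftrightarrow> (\<exists>G. G \<subseteq> L \<and> free_of_rank sc G n \<and> direct_summand sc G)"

context module
begin

lemma complementaryD:
  assumes "complementary scale G N"
  shows "subspace N" "G \<inter> N = {0}" "\<exists>g x. y = g + x \<and> g \<in> G \<and> x \<in> N"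
proof -
  show "subspace N" "G \<inter> N = {0}" using assms unfolding complementary_def by blast+
  have "y \<in> {g + x | g x. g \<in> G \<and> x \<in> N}" using assms unfolding complementary_def by simp
  then show "\<exists>g x. y = g + x \<and> g \<in> G \<and> x \<in> N" by blast
qed

lemma has_free_summand_iff:
  "has_free_summand scale L n \<longleftrightarrow>
     (\<exists>B N. finite B \<and> card B = n \<and> independent B \<and> span B \<subseteq> L \<and> complementary scale (span B) N)"
  unfolding has_free_summand_def free_of_rank_def direct_summand_def complementary_def
  using subspace_span by blast

lemma has_free_summand_0: "subspace L \<Longrightarrow> has_free_summand scale L 0"
proof -
  have "{g + x |g x. g \<in> {0::'b} \<and> x \<in> UNIV} = UNIV" by (simp add: set_eq_iff)
  then have "complementary scale (span {}) UNIV" by (simp add: complementary_def span_empty)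
  moreover assume "subspace L"
  ultimately show ?thesis unfolding has_free_summand_iff
    by (intro exI[of _ "{}"] exI[of _ UNIV]) (simp add: span_empty subspace_0 independent_empty)
qed

lemma has_free_summand_mono: "L \<subseteq> L' \<Longrightarrow> has_free_summand scale L n \<Longrightarrow> has_free_summand scale L' n"
  unfolding has_free_summand_def by blast

lemma dual_map_hom:
  assumes "f \<in> dual_maps scale"
  shows "f (x + y) = f x + f y" "f (c *s x) = c * f x" "f 0 = 0" "f (x - y) = f x - f y"
proof -
  interpret f: module_hom scale "(*)" f using assms by (simp add: dual_maps_def)
  show "f (x + y) = f x + f y" "f (c *s x) = c * f x" "f 0 = 0" "f (x - y) = f x - f y"
    by (simp_all add: f.add f.scale f.diff)
qed

lemma dual_map_scale_left:
  assumes "f \<in> dual_maps scale"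
  shows "(\<lambda>y. c * f y) \<in> dual_maps scale"
  unfolding dual_maps_def module_hom_iff mem_Collect_eq
  using module_axioms module_mult by (simp add: dual_map_hom[OF assms] distrib_left mult.left_commute)

lemma exists_coordinate_functional:
  assumes W: "subspace W" and free: "\<And>c. c *s b \<in> W \<Longrightarrow> c = 0"
    and spans: "\<And>y. \<exists>c. y - c *s b \<in> W"
  obtains f where "f \<in> dual_maps scale" "\<And>y c. y - c *s b \<in> W \<Longrightarrow> f y = c"
proof -
  have unique: "c = c'" if "y - c *s b \<in> W" "y - c' *s b \<in> W" for y c c'
  proof -
    have "(c' - c) *s b = (y - c *s b) - (y - c' *s b)" by (simp add: scale_left_diff_distrib)
    also have "\<dots> \<in> W" using subspace_diff[OF W that] .
    finally show ?thesis using free[of "c' - c"] by simp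
  qed
  define f where "f y = (THE c. y - c *s b \<in> W)" for y
  have f: "f y = c" if "y - c *s b \<in> W" for y c
    unfolding f_def using that unique by (intro the_equality) auto
  have "f (y + z) = f y + f z" for y z
  proof -
    obtain c d where c: "y - c *s b \<in> W" and d: "z - d *s b \<in> W" using spans by metis
    have "(y + z) - (c + d) *s b = (y - c *s b) + (z - d *s b)" by (simp add: scale_left_distrib)
    also have "\<dots> \<in> W" using subspace_add[OF W c d] .
    finally show ?thesis using f c d by metis
  qed
  moreover have "f (r *s y) = r * f y" for r y
  proof -
    obtain c where c: "y - c *s b \<in> W" using spans by metis
    have "r *s y - (r * c) *s b = r *s (y - c *s b)" by (simp add: scale_right_diff_distrib)
    also have "\<dots> \<in> W" using subspace_scale[OF W c] .
    finally show ?thesis using f c by metis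
  qed
  ultimately have "f \<in> dual_maps scale"
    unfolding dual_maps_def module_hom_iff using module_axioms module_mult by blast
  with f that show ?thesis by blast
qed

lemma scale_in_span_complement_basis:
  assumes N: "complementary scale (span B) N" and B: "finite B" "independent B" "b \<in> B"
    and c: "c *s b \<in> span (N \<union> (B - {b}))"
  shows "c = 0"
proof -
  obtain n w where nw: "c *s b = n + w" "n \<in> span N" "w \<in> span (B - {b})"
    using c unfolding span_Un by blast
  have "n \<in> N" using nw(2) complementaryD(1)[OF N] by (simp add: span_eq_iff[THEN iffD2])
  moreover have "n \<in> span B"
    using nw(1,3) span_mono[of "B - {b}" B] span_base[OF B(3)]
    by (metis Diff_subset add_diff_cancel_right' span_diff span_scale subsetD)
  ultimately have "n = 0" using complementaryD(2)[OF N] by blast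
  obtain d where d: "w = (\<Sum>v\<in>B - {b}. d v *s v)" using nw(3) span_finite[of "B - {b}"] B(1) by auto
  define u where "u v = (if v = b then c else - d v)" for v
  have "(\<Sum>v\<in>B - {b}. u v *s v) = - (\<Sum>v\<in>B - {b}. d v *s v)"
    unfolding u_def by (simp add: sum_negf[symmetric])
  then have "(\<Sum>v\<in>B. u v *s v) = c *s b - (\<Sum>v\<in>B - {b}. d v *s v)"
    using B(1,3) by (simp add: sum.remove u_def)
  also have "\<dots> = 0" using nw(1) \<open>n = 0\<close> d by simp
  finally have "u b = 0" using independentD[OF B(2) B(1) order_refl _ B(3)] by blast
  then show ?thesis by (simp add: u_def)
qed

lemma complementary_basis_coordinate:
  assumes N: "complementary scale (span B) N" and B: "finite B" "independent B" "b \<in> B"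
  obtains f where "f \<in> dual_maps scale" "\<And>r. f (\<Sum>v\<in>B. r v *s v) = r b"
proof -
  define W where "W = span (N \<union> (B - {b}))"
  have "\<exists>k. y - k *s b \<in> W" for y
  proof -
    obtain g n where gn: "y = g + n" "g \<in> span B" "n \<in> N" using complementaryD(3)[OF N] by blast
    have "insert b (B - {b}) = B" using B(3) by blast
    then obtain k where k: "g - k *s b \<in> span (B - {b})" using gn(2) span_breakdown_eq by metis
    have "n \<in> W" unfolding W_def using gn(3) by (intro span_base) blast
    moreover have "g - k *s b \<in> W" unfolding W_def using k span_mono[of "B - {b}" "N \<union> (B - {b})"] by blast
    ultimately have "n + (g - k *s b) \<in> W" unfolding W_def by (rule span_add)
    then show ?thesis using gn(1) by (intro exI[of _ k]) (simp add: algebra_simps)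
  qed
  then obtain f where f: "f \<in> dual_maps scale" "\<And>y c. y - c *s b \<in> W \<Longrightarrow> f y = c"
    using exists_coordinate_functional[of W b] scale_in_span_complement_basis[OF N B]
    unfolding W_def by blast
  have "f (\<Sum>v\<in>B. r v *s v) = r b" for r
  proof (rule f(2))
    have "(\<Sum>v\<in>B. r v *s v) - r b *s b = (\<Sum>v\<in>B - {b}. r v *s v)"
      using B(1,3) by (simp add: sum.remove)
    also have "\<dots> \<in> W" unfolding W_def by (intro span_sum span_scale span_base) blast
    finally show "(\<Sum>v\<in>B. r v *s v) - r b *s b \<in> W" .
  qed
  with f(1) that show ?thesis by blast
qed

lemma independent_insertI:
  assumes B: "finite B" "independent B" and z: "\<And>c. c *s z \<in> span B \<Longrightarrow> c = 0"
  shows "z \<notin> B" "independent (insert z B)"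
proof -
  show zB: "z \<notin> B" using z[of 1] span_base by force
  show "independent (insert z B)"
  proof
    assume "dependent (insert z B)"
    then obtain w where w: "\<exists>v\<in>insert z B. w v \<noteq> 0" "(\<Sum>v\<in>insert z B. w v *s v) = 0"
      using dependent_finite[of "insert z B"] B(1) by auto
    then have "w z *s z = - (\<Sum>v\<in>B. w v *s v)"
      using B(1) zB by (simp add: eq_neg_iff_add_eq_0)
    also have "\<dots> \<in> span B" by (intro span_neg span_sum span_scale span_base)
    finally have wz: "w z = 0" by (rule z)
    then have "(\<Sum>v\<in>B. w v *s v) = 0" using w(2) B(1) zB by simp
    then have "\<forall>v\<in>B. w v = 0" using independentD[OF B(2) B(1) order_refl] by blast
    then show False using w(1) wz by auto
  qed
qed

lemma complementary_insert:
  assumes N: "complementary scale (span B) N" and z: "z \<in> N"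
    and f: "f \<in> dual_maps scale" "f z = 1"
  shows "complementary scale (span (insert z B)) (N \<inter> {w. f w = 0})"
  unfolding complementary_def
proof (intro conjI)
  have subN: "subspace N" using complementaryD(1)[OF N] .
  show "subspace (N \<inter> {w. f w = 0})"
    by (intro subspace_inter subN subspaceI) (auto simp: dual_map_hom[OF f(1)])
  show "span (insert z B) \<inter> (N \<inter> {w. f w = 0}) = {0}"
  proof (intro equalityI subsetI)
    fix w assume w: "w \<in> span (insert z B) \<inter> (N \<inter> {w. f w = 0})"
    then obtain k where k: "w - k *s z \<in> span B" using span_breakdown_eq by blast
    have "w - k *s z \<in> N" using w z by (intro subspace_diff[OF subN] subspace_scale[OF subN]) auto
    with k have "w - k *s z = 0" using complementaryD(2)[OF N] by blast
    moreover have "k = 0" using w \<open>w - k *s z = 0\<close> f by (auto simp: dual_map_hom[OF f(1)])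
    ultimately show "w \<in> {0}" by simp
  qed (simp add: subspace_0[OF subN] span_zero dual_map_hom[OF f(1)])
  show "{g + x |g x. g \<in> span (insert z B) \<and> x \<in> N \<inter> {w. f w = 0}} = UNIV"
  proof (intro equalityI subsetI)
    fix m
    obtain h w where hw: "m = h + w" "h \<in> span B" "w \<in> N" using complementaryD(3)[OF N] by blast
    have "h + f w *s z \<in> span (insert z B)"
      unfolding span_breakdown_eq using hw(2) by (intro exI[of _ "f w"]) simp
    moreover have "w - f w *s z \<in> N \<inter> {w. f w = 0}"
      using hw(3) z f by (auto intro: subspace_diff[OF subN] subspace_scale[OF subN] simp: dual_map_hom[OF f(1)])
    moreover have "m = (h + f w *s z) + (w - f w *s z)" using hw(1) by simp
    ultimately show "m \<in> {g + x |g x. g \<in> span (insert z B) \<and> x \<in> N \<inter> {w. f w = 0}}" by blast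
  qed simp
qed

end

context local_module
begin

lemma I_SM_subset_span: "I_SM scale mm S \<subseteq> span S"
  unfolding I_SM_def by blast

lemma dual_map_I_SM: "y \<in> I_SM scale mm S \<Longrightarrow> f \<in> dual_maps scale \<Longrightarrow> f y \<in> mm"
  unfolding I_SM_def by blast

lemma subspace_I_SM: "subspace (I_SM scale mm S)"
  unfolding I_SM_def
  by (rule subspaceI) (auto simp: dual_map_hom ideal_ofD[OF ideal_mm] span_zero span_add span_scale)

lemma scale_mm_in_I_SM: "r \<in> mm \<Longrightarrow> y \<in> span S \<Longrightarrow> r *s y \<in> I_SM scale mm S"
  unfolding I_SM_def
  by (auto simp: dual_map_hom span_scale mult.commute[of r] intro: ideal_ofD(3)[OF ideal_mm])

lemma basis_residually_independent:
  assumes "complementary scale (span B) N" "finite B" "independent B"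
  shows "residually_independent (I_SM scale mm S) B (\<lambda>v. v)"
  unfolding residually_independent_def
proof (intro allI impI ballI)
  fix r b assume r: "(\<Sum>v\<in>B. r v *s v) \<in> I_SM scale mm S" and b: "b \<in> B"
  obtain f where "f \<in> dual_maps scale" "\<And>r. f (\<Sum>v\<in>B. r v *s v) = r b"
    using complementary_basis_coordinate[OF assms b] by blast
  with r show "r b \<in> mm" using dual_map_I_SM by metis
qed

lemma has_free_summand_Suc:
  assumes B: "finite B" "independent B" and N: "complementary scale (span B) N"
    and BS: "span B \<subseteq> span S" and y: "y \<in> span S"
    and y_new: "\<nexists>a. y - (\<Sum>t\<in>B. a t *s t) \<in> I_SM scale mm S"
  shows "has_free_summand scale (span S) (Suc (card B))"
proof -
  obtain g z where gz: "y = g + z" "g \<in> span B" "z \<in> N" using complementaryD(3)[OF N] by blast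
  have zS: "z \<in> span S" using gz BS y by (metis add_diff_cancel_left' span_diff subsetD)
  have "z \<notin> I_SM scale mm S"
  proof
    assume "z \<in> I_SM scale mm S"
    moreover obtain a where "g = (\<Sum>t\<in>B. a t *s t)" using gz(2) span_finite[OF B(1)] by auto
    ultimately show False using y_new gz(1) by (metis add_diff_cancel_left')
  qed
  then obtain f0 where f0: "f0 \<in> dual_maps scale" "f0 z \<notin> mm" using zS unfolding I_SM_def by blast
  obtain u where u: "u * f0 z = 1" using unit_if_notin_mm[OF f0(2)] by blast
  define f where "f = (\<lambda>w. u * f0 w)"
  have f: "f \<in> dual_maps scale" "f z = 1"
    using dual_map_scale_left[OF f0(1)] u by (simp_all add: f_def)
  have z_free: "c = 0" if "c *s z \<in> span B" for c
  proof -
    have "c *s z \<in> N" using subspace_scale[OF complementaryD(1)[OF N] gz(3)] .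
    with that have "c *s z = 0" using complementaryD(2)[OF N] by blast
    then have "f (c *s z) = 0" using dual_map_hom(3)[OF f(1)] by simp
    then show "c = 0" using dual_map_hom(2)[OF f(1)] f(2) by simp
  qed
  have "finite (insert z B)" "card (insert z B) = Suc (card B)" "independent (insert z B)"
    using independent_insertI[OF B z_free] B(1) by simp_all
  moreover have "span (insert z B) \<subseteq> span S"
    using zS BS span_superset[of B] by (intro span_minimal) auto
  moreover note complementary_insert[OF N gz(3) f]
  ultimately show ?thesis unfolding has_free_summand_iff by blast
qed

lemma has_free_summand_residually_independent:
  assumes "has_free_summand scale (span S) n"
  shows "\<exists>x. (\<forall>i<n. x i \<in> span S) \<and> residually_independent (I_SM scale mm S) {..<n} x"
proof -
  obtain B N where B: "finite B" "card B = n" "independent B" "span B \<subseteq> span S"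
      "complementary scale (span B) N"
    using assms unfolding has_free_summand_iff by blast
  obtain e where e: "bij_betw e {..<n} B"
    using ex_bij_betw_nat_finite[OF B(1)] B(2) by (auto simp: lessThan_atLeast0)
  have "residually_independent (I_SM scale mm S) {..<n} ((\<lambda>v. v) \<circ> e)"
    using residually_independent_reindex[OF basis_residually_independent[OF B(5,1,3)] e] .
  moreover have "\<forall>i<n. e i \<in> span S" using e B(4) span_superset[of B] by (auto simp: bij_betw_def)
  ultimately show ?thesis by (intro exI[of _ e]) (simp add: comp_def)
qed

text \<open>Greedy extension: while fewer than n basis vectors are chosen, the exchange lemma yields
  some x i outside span B + I, which enlarges the free summand by one.\<close>
lemma residually_independent_has_free_summand:
  assumes x: "\<And>i. i < n \<Longrightarrow> x i \<in> span S"
    and ind: "residually_independent (I_SM scale mm S) {..<n} x"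
  shows "has_free_summand scale (span S) n"
proof -
  have "has_free_summand scale (span S) k" if "k \<le> n" for k
    using that
  proof (induction k)
    case 0
    show ?case by (simp add: has_free_summand_0)
  next
    case (Suc k)
    then obtain B N where B: "finite B" "card B = k" "independent B" "span B \<subseteq> span S"
        "complementary scale (span B) N"
      unfolding has_free_summand_iff by auto
    have "\<exists>i<n. \<nexists>a. x i - (\<Sum>t\<in>B. a t *s t) \<in> I_SM scale mm S"
    proof (rule ccontr)
      assume "\<not> ?thesis"
      then have rep: "\<And>i. i \<in> {..<n} \<Longrightarrow> \<exists>a. x i - (\<Sum>t\<in>B. a t *s t) \<in> I_SM scale mm S"
        by blast
      have "\<And>t r. t \<in> B \<Longrightarrow> r \<in> mm \<Longrightarrow> r *s t \<in> I_SM scale mm S"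
        using B(4) span_superset[of B] scale_mm_in_I_SM by blast
      then have "card {..<n} \<le> card B"
        using residually_independent_card_le[OF subspace_I_SM B(1) finite_lessThan _ rep ind] by blast
      then show False using Suc.prems B(2) by simp
    qed
    then obtain i where "i < n" "\<nexists>a. x i - (\<Sum>t\<in>B. a t *s t) \<in> I_SM scale mm S" by blast
    then show ?case using has_free_summand_Suc[OF B(1,3,5,4) x] B(2) by blast
  qed
  then show ?thesis by simp
qed

lemma has_free_summand_le_card:
  assumes F: "finite F" "span F = UNIV" and L: "has_free_summand scale L n"
  shows "n \<le> card F"
proof -
  have "has_free_summand scale (span UNIV) n" using has_free_summand_mono[OF _ L] by simp
  then obtain x where ind: "residually_independent (I_SM scale mm UNIV) {..<n} x"
    using has_free_summand_residually_independent by blast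
  have "\<exists>a. x i - (\<Sum>t\<in>F. a t *s t) \<in> I_SM scale mm UNIV" for i
  proof -
    have "x i \<in> range (\<lambda>a. \<Sum>t\<in>F. a t *s t)" using F span_finite[OF F(1)] by simp
    then obtain a where "x i = (\<Sum>t\<in>F. a t *s t)" by blast
    then show ?thesis using subspace_0[OF subspace_I_SM] by (intro exI[of _ a]) simp
  qed
  moreover have "\<And>t r. t \<in> F \<Longrightarrow> r \<in> mm \<Longrightarrow> r *s t \<in> I_SM scale mm UNIV"
    using scale_mm_in_I_SM by simp
  ultimately have "card {..<n} \<le> card F"
    using residually_independent_card_le[OF subspace_I_SM F(1) finite_lessThan _ _ ind] by blast
  then show ?thesis by simp
qed

lemma has_free_summand_delta_m:
  assumes "fin_gen_module scale"
  shows "has_free_summand scale (span S) (delta_m scale S)"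
    and "has_free_summand scale (span S) n \<Longrightarrow> n \<le> delta_m scale S"
proof -
  obtain F where F: "finite F" "span F = UNIV" using assms unfolding fin_gen_module_def by blast
  have delta: "delta_m scale S = (GREATEST n. has_free_summand scale (span S) n)"
    unfolding delta_m_def has_free_summand_def ..
  note bounded = has_free_summand_le_card[OF F]
  show "has_free_summand scale (span S) (delta_m scale S)"
    unfolding delta using has_free_summand_0[OF subspace_span] bounded by (rule GreatestI_nat)
  show "n \<le> delta_m scale S" if "has_free_summand scale (span S) n"
    unfolding delta using that bounded by (rule Greatest_le_nat)
qed

lemma has_free_summand_iff_strict_subspace_chain:
  assumes "0 < n"
  shows "has_free_summand scale (span S) n \<longleftrightarrow>
    (\<exists>C. strict_subspace_chain scale C n (I_SM scale mm S) (span S))"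
proof
  assume "has_free_summand scale (span S) n"
  then obtain x where "\<forall>i<n. x i \<in> span S" "residually_independent (I_SM scale mm S) {..<n} x"
    using has_free_summand_residually_independent by blast
  then show "\<exists>C. strict_subspace_chain scale C n (I_SM scale mm S) (span S)"
    using residually_independent_strict_subspace_chain[OF assms subspace_I_SM subspace_span
        I_SM_subset_span]
    by blast
next
  assume "\<exists>C. strict_subspace_chain scale C n (I_SM scale mm S) (span S)"
  then obtain x where "\<forall>i<n. x i \<in> span S" "residually_independent (I_SM scale mm S) {..<n} x"
    using strict_subspace_chain_residually_independent scale_mm_in_I_SM by metis
  then show "has_free_summand scale (span S) n"
    using residually_independent_has_free_summand by blast
qed

theorem delta_m_eq_quot_length:
  assumes "fin_gen_module scale"
  shows "enat (delta_m scale S) = quot_length scale (span S) (I_SM scale mm S)"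
proof -
  let ?lengths = "{enat n | n. \<exists>C. strict_subspace_chain scale C n (I_SM scale mm S) (span S)}"
  have "enat (delta_m scale S) \<le> Sup ?lengths"
  proof (cases "delta_m scale S = 0")
    case False
    then have "enat (delta_m scale S) \<in> ?lengths"
      using has_free_summand_delta_m(1)[OF assms] has_free_summand_iff_strict_subspace_chain
      by blast
    then show ?thesis by (rule Sup_upper)
  qed (simp add: zero_enat_def[symmetric])
  moreover have "Sup ?lengths \<le> enat (delta_m scale S)"
  proof (rule Sup_least)
    fix q assume "q \<in> ?lengths"
    then obtain n where "q = enat n" "\<exists>C. strict_subspace_chain scale C n (I_SM scale mm S) (span S)"
      by blast
    then show "q \<le> enat (delta_m scale S)"
      using has_free_summand_iff_strict_subspace_chain[of n] has_free_summand_delta_m(2)[OF assms]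
      by (cases "n = 0") auto
  qed
  ultimately show ?thesis by (simp add: quot_length_eq_Sup_chains)
qed

end

theorem lemma3p10:
  fixes sc :: "'a::comm_ring_1 \<Rightarrow> 'm::ab_group_add \<Rightarrow> 'm"
    and mm :: "'a set"
    and S :: "'m set"
  assumes "module sc"
    and "noetherian_ring TYPE('a)"
    and "local_ring_max mm"
    and "fin_gen_module sc"
  shows "enat (delta_m sc S) = quot_length sc (module.span sc S) (I_SM sc mm S)"
proof -
  interpret local_module sc mm
    by (intro local_module.intro local_module_axioms.intro assms(1,3))
  show ?thesis using delta_m_eq_quot_length[OF assms(4)] .
qed

end
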